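(* Let $d$ be a positive integer, let $a>0$, and let $x$ be a real number with $x>1-\frac{2}{d+1}$ (and $x<1$). Among all degree distributions $\gamma$ with average degree $a$ and maximal degree $d$, the one which maximizes $\gamma(x)$ has the form $\gamma(x)=\gamma_ix^{i-1}+\gamma_{i+1}x^{i}$, where $i=\lfloor a\rfloor$ is the largest integer smaller than $a$.
   Context: A degree distribution is a polynomial $\gamma(x)=\sum_{k\ge2}\gamma_kx^{k-1}$ with $\gamma_k\ge0$ and $\sum_k\gamma_k=1$; its maximal degree is the largest $k$ with $\gamma_k\ne0$, and its average degree $a$ is defined by $1/a=\int_0^1\gamma(x)\,dx$. *)

theory Defs
  imports Complex_Main
begin

text \<open>A degree distribution with maximal degree (at most) d, represented by its
coefficient sequence g :: nat => real, where g k is the coefficient gamma_k of x^(k-1).\<close>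
definition degree_dist :: "nat \<Rightarrow> (nat \<Rightarrow> real) \<Rightarrow> bool" where
  "degree_dist d g \<longleftrightarrow> (\<forall>k. 0 \<le> g k) \<and> (\<forall>k. k < 2 \<or> d < k \<longrightarrow> g k = 0)
     \<and> (\<Sum>k=2..d. g k) = 1"

definition dd_eval :: "nat \<Rightarrow> (nat \<Rightarrow> real) \<Rightarrow> real \<Rightarrow> real" where
  "dd_eval d g x = (\<Sum>k=2..d. g k * x ^ (k - 1))"

text \<open>Average degree a: 1/a = integral over [0,1] of gamma, which equals sum of gamma_k / k.\<close>
definition avg_degree :: "nat \<Rightarrow> (nat \<Rightarrow> real) \<Rightarrow> real \<Rightarrow> bool" where
  "avg_degree d g a \<longleftrightarrow> 1 / a = (\<Sum>k=2..d. g k / real k)"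

definition feasible_dd :: "nat \<Rightarrow> real \<Rightarrow> (nat \<Rightarrow> real) \<Rightarrow> bool" where
  "feasible_dd d a g \<longleftrightarrow> degree_dist d g \<and> avg_degree d g a"

definition maximizer_dd :: "nat \<Rightarrow> real \<Rightarrow> real \<Rightarrow> (nat \<Rightarrow> real) \<Rightarrow> bool" where
  "maximizer_dd d a x g \<longleftrightarrow> feasible_dd d a g \<and>
     (\<forall>h. feasible_dd d a h \<longrightarrow> dd_eval d h x \<le> dd_eval d g x)"

end

theory Submission
  imports Defs
begin

text \<open>
  Maximising \<open>\<gamma>(x) = \<Sum>\<^sub>k \<gamma>\<^sub>k x^(k-1)\<close> subject to \<open>\<Sum>\<^sub>k \<gamma>\<^sub>k = 1\<close>,
  \<open>\<Sum>\<^sub>k \<gamma>\<^sub>k / k = 1/a\<close> and \<open>\<gamma> \<ge> 0\<close> is a linear program. Any \<open>\<alpha>, \<beta>\<close> with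
  \<open>x^(k-1) \<le> \<alpha> + \<beta>/k\<close> for \<open>2 \<le> k \<le> d\<close> bound \<open>\<gamma>(x)\<close> by \<open>\<alpha> + \<beta>/a\<close>, with equality
  exactly for \<open>\<gamma>\<close> supported where the bound is tight. After multiplying by \<open>k\<close>
  the condition says that the sequence \<open>k x^(k-1)\<close> lies below the line \<open>\<alpha> k + \<beta>\<close>.
  For \<open>x > 1 - 2/(d+1)\<close> this sequence is strictly concave on \<open>1..d+1\<close>, so the
  line through its values at \<open>i = \<lfloor>a\<rfloor>\<close> and \<open>i+1\<close> works and touches it only
  there; the distribution on \<open>{i, i+1}\<close> with average degree \<open>a\<close> attains the bound.
\<close>

lemma monomial_deriv_diff_strict_decreasing:
  fixes x :: real
  assumes "1 \<le> k" and "real k < (real k + 2) * x" and "x < 1"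
  shows "real (k + 2) * x ^ (k + 1) - real (k + 1) * x ^ k
           < real (k + 1) * x ^ k - real k * x ^ (k - 1)"
proof -
  have "1 \<le> real k"
    using assms(1) by simp
  then have "0 < (real k + 2) * x"
    using assms(2) by linarith
  then have "0 < x"
    by (auto simp: zero_less_mult_iff)
  obtain m where k: "k = Suc m" using assms(1) by (cases k) auto
  have "(real (k + 1) * x ^ k - real k * x ^ (k - 1))
          - (real (k + 2) * x ^ (k + 1) - real (k + 1) * x ^ k)
        = x ^ (k - 1) * ((1 - x) * ((real k + 2) * x - real k))"
    unfolding k by (simp add: algebra_simps)
  moreover have "0 < x ^ (k - 1) * ((1 - x) * ((real k + 2) * x - real k))"
    using \<open>0 < x\<close> assms(2,3) by simp
  ultimately show ?thesis by linarith
qed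

lemma strict_concave_diff_decreasing:
  fixes c :: "nat \<Rightarrow> real"
  assumes conc: "\<And>k. m \<le> k \<Longrightarrow> k + 2 \<le> n \<Longrightarrow> c (k + 2) - c (k + 1) < c (k + 1) - c k"
    and "m \<le> j" and "j < k" and "k + 1 \<le> n"
  shows "c (k + 1) - c k < c (j + 1) - c j"
proof -
  from \<open>j < k\<close> have "Suc j \<le> k" by simp
  from this \<open>k + 1 \<le> n\<close> show ?thesis
  proof (induction k rule: dec_induct)
    case base
    then show ?case using conc[of j] \<open>m \<le> j\<close> by simp
  next
    case (step l)
    then show ?case using conc[of l] \<open>m \<le> j\<close> by simp
  qed
qed

lemma strict_concave_below_chord:
  fixes c :: "nat \<Rightarrow> real"
  assumes conc: "\<And>k. m \<le> k \<Longrightarrow> k + 2 \<le> n \<Longrightarrow> c (k + 2) - c (k + 1) < c (k + 1) - c k"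
    and "m \<le> i" and "i + 1 \<le> n" and "m \<le> k" and "k \<le> n"
  defines "chord \<equiv> \<lambda>k. c i + (real k - real i) * (c (i + 1) - c i)"
  shows "c k \<le> chord k" and "k \<noteq> i \<Longrightarrow> k \<noteq> i + 1 \<Longrightarrow> c k < chord k"
proof -
  define gap where "gap k = chord k - c k" for k
  have gap_Suc: "gap (Suc l) = gap l + ((c (i + 1) - c i) - (c (l + 1) - c l))" for l
    by (simp add: gap_def chord_def algebra_simps)
  have gap_zero: "gap i = 0" "gap (i + 1) = 0"
    by (simp_all add: gap_def chord_def)
  have gap_increasing: "gap l < gap (Suc l)" if "i < l" "l + 1 \<le> n" for l
    using gap_Suc[of l] strict_concave_diff_decreasing[OF conc \<open>m \<le> i\<close> that] by simp
  have gap_decreasing: "gap (Suc l) < gap l" if "m \<le> l" "l < i" for l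
    using gap_Suc[of l] strict_concave_diff_decreasing[OF conc \<open>m \<le> l\<close> \<open>l < i\<close> \<open>i + 1 \<le> n\<close>]
    by simp
  have right: "0 < gap l" if "i + 1 < l" "l \<le> n" for l
  proof -
    from that have "Suc (i + 1) \<le> l" by simp
    from this \<open>l \<le> n\<close> show ?thesis
    proof (induction l rule: dec_induct)
      case base
      then show ?case using gap_increasing[of "i + 1"] gap_zero by simp
    next
      case (step l)
      then show ?case using gap_increasing[of l] by simp
    qed
  qed
  have left: "0 < gap l" if "m \<le> l" "l < i" for l
    using \<open>l < i\<close> \<open>m \<le> l\<close>
  proof (induction l rule: strict_inc_induct)
    case (base l)
    then show ?case using gap_decreasing[of l] gap_zero by simp
  next
    case (step l)
    then show ?case using gap_decreasing[of l] by simp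
  qed
  have "k < i \<or> k = i \<or> k = i + 1 \<or> i + 1 < k" by linarith
  then have "0 \<le> gap k \<and> (k \<noteq> i \<longrightarrow> k \<noteq> i + 1 \<longrightarrow> 0 < gap k)"
    using left[of k] right[of k] gap_zero \<open>m \<le> k\<close> \<open>k \<le> n\<close> by auto
  then show "c k \<le> chord k" and "k \<noteq> i \<Longrightarrow> k \<noteq> i + 1 \<Longrightarrow> c k < chord k"
    by (auto simp: gap_def)
qed

lemma feasible_dd_support:
  assumes "feasible_dd d a h" and "h k \<noteq> 0"
  shows "k \<in> {2..d}"
  using assms unfolding feasible_dd_def degree_dist_def by (auto simp: not_less)

lemma feasible_dd_sum_affine:
  assumes "feasible_dd d a h"
  shows "(\<Sum>k=2..d. h k * (\<alpha> + \<beta> / real k)) = \<alpha> + \<beta> / a"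
proof -
  have mass: "(\<Sum>k=2..d. h k) = 1" and avg: "(\<Sum>k=2..d. h k / real k) = 1 / a"
    using assms unfolding feasible_dd_def degree_dist_def avg_degree_def by auto
  have "(\<Sum>k=2..d. h k * (\<alpha> + \<beta> / real k))
        = \<alpha> * (\<Sum>k=2..d. h k) + \<beta> * (\<Sum>k=2..d. h k / real k)"
    by (simp add: sum_distrib_left sum.distrib algebra_simps)
  then show ?thesis using mass avg by simp
qed

lemma dd_eval_eq_dual_minus_slack:
  assumes "feasible_dd d a h"
  shows "dd_eval d h x = \<alpha> + \<beta> / a - (\<Sum>k=2..d. h k * (\<alpha> + \<beta> / real k - x ^ (k - 1)))"
  using feasible_dd_sum_affine[OF assms, of \<alpha> \<beta>]
  by (simp add: dd_eval_def right_diff_distrib sum_subtractf)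

lemma dd_eval_dual_bound:
  assumes "feasible_dd d a h"
    and dual: "\<And>k. k \<in> {2..d} \<Longrightarrow> x ^ (k - 1) \<le> \<alpha> + \<beta> / real k"
  shows "dd_eval d h x \<le> \<alpha> + \<beta> / a"
    and "h k \<noteq> 0 \<Longrightarrow> x ^ (k - 1) < \<alpha> + \<beta> / real k \<Longrightarrow> dd_eval d h x < \<alpha> + \<beta> / a"
proof -
  have nonneg: "\<And>k. 0 \<le> h k"
    using assms(1) unfolding feasible_dd_def degree_dist_def by auto
  have slack_nonneg: "0 \<le> h k * (\<alpha> + \<beta> / real k - x ^ (k - 1))" if "k \<in> {2..d}" for k
    using nonneg[of k] dual[OF that] by simp
  have "0 \<le> (\<Sum>k=2..d. h k * (\<alpha> + \<beta> / real k - x ^ (k - 1)))"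
    using slack_nonneg by (rule sum_nonneg)
  then show "dd_eval d h x \<le> \<alpha> + \<beta> / a"
    using dd_eval_eq_dual_minus_slack[OF assms(1), of x \<alpha> \<beta>] by simp
  assume "h k \<noteq> 0" and "x ^ (k - 1) < \<alpha> + \<beta> / real k"
  then have "0 < h k * (\<alpha> + \<beta> / real k - x ^ (k - 1))"
    using nonneg[of k] by simp
  then have "0 < (\<Sum>k=2..d. h k * (\<alpha> + \<beta> / real k - x ^ (k - 1)))"
    using feasible_dd_support[OF assms(1) \<open>h k \<noteq> 0\<close>] slack_nonneg
    by (intro sum_pos2[of _ k]) simp_all
  then show "dd_eval d h x < \<alpha> + \<beta> / a"
    using dd_eval_eq_dual_minus_slack[OF assms(1), of x \<alpha> \<beta>] by simp
qed

lemma dd_eval_complementary_slackness: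
  assumes "feasible_dd d a h"
    and "\<And>k. h k \<noteq> 0 \<Longrightarrow> x ^ (k - 1) = \<alpha> + \<beta> / real k"
  shows "dd_eval d h x = \<alpha> + \<beta> / a"
proof -
  have "(\<Sum>k=2..d. h k * (\<alpha> + \<beta> / real k - x ^ (k - 1))) = 0"
    by (rule sum.neutral) (use assms(2) in fastforce)
  then show ?thesis using dd_eval_eq_dual_minus_slack[OF assms(1), of x \<alpha> \<beta>] by simp
qed

lemma feasible_dd_avg_degree_bounds:
  assumes "feasible_dd d a h" and "0 < a"
  shows "2 \<le> a" and "a \<le> real d"
proof -
  have nonneg: "\<And>k. 0 \<le> h k" and mass: "(\<Sum>k=2..d. h k) = 1"
    and avg: "1 / a = (\<Sum>k=2..d. h k / real k)"
    using assms(1) unfolding feasible_dd_def degree_dist_def avg_degree_def by auto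
  have "(\<Sum>k=2..d. h k / real k) \<le> (\<Sum>k=2..d. h k / 2)"
    by (intro sum_mono divide_left_mono) (auto simp: nonneg)
  also have "\<dots> = 1 / 2"
    using mass by (simp add: sum_divide_distrib[symmetric])
  finally have "1 / a \<le> 1 / 2"
    using avg by simp
  then show "2 \<le> a"
    using \<open>0 < a\<close> by (simp add: divide_simps)
  have "d \<noteq> 0"
    using mass by (cases "d = 0") auto
  have "1 / real d = (\<Sum>k=2..d. h k / real d)"
    using mass by (simp add: sum_divide_distrib[symmetric])
  also have "\<dots> \<le> (\<Sum>k=2..d. h k / real k)"
    by (intro sum_mono divide_left_mono) (auto simp: nonneg)
  finally have "1 / real d \<le> 1 / a"
    using avg by simp
  then show "a \<le> real d"
    using \<open>0 < a\<close> \<open>d \<noteq> 0\<close> by (simp add: divide_simps)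
qed

text \<open>The weights solve \<open>p + q = 1\<close> and \<open>p/i + q/(i+1) = 1/a\<close>.\<close>

definition two_point_dd :: "nat \<Rightarrow> real \<Rightarrow> nat \<Rightarrow> real" where
  "two_point_dd i a k =
     (if k = i then real i * (real i + 1 - a) / a else 0)
   + (if k = i + 1 then (real i + 1) * (a - real i) / a else 0)"

lemma feasible_dd_two_point:
  assumes "2 \<le> i" and "real i \<le> a" and "a \<le> real i + 1" and "a \<le> real d"
  shows "feasible_dd d a (two_point_dd i a)"
proof -
  define p where "p = real i * (real i + 1 - a) / a"
  define q where "q = (real i + 1) * (a - real i) / a"
  have "i \<le> d" using assms(2,4) by linarith
  have q_zero: "q = 0" if "d < i + 1"
    using that assms(2,4) by (simp add: q_def)
  have sum_two_point: "(\<Sum>k=2..d. two_point_dd i a k * f k) = p * f i + q * f (i + 1)" for f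
  proof -
    have "(\<Sum>k=2..d. two_point_dd i a k * f k)
          = (\<Sum>k=2..d. (if k = i then p * f i else 0) + (if k = i + 1 then q * f (i + 1) else 0))"
      by (intro sum.cong) (auto simp: two_point_dd_def p_def q_def distrib_right)
    also have "\<dots> = p * f i + q * f (i + 1)"
      using assms(1) \<open>i \<le> d\<close> q_zero by (simp add: sum.distrib)
    finally show ?thesis .
  qed
  have "0 < a" using assms(1,2) by linarith
  show ?thesis
    unfolding feasible_dd_def degree_dist_def avg_degree_def
  proof (intro conjI allI impI)
    show "0 \<le> two_point_dd i a k" for k
      using assms(2,3) \<open>0 < a\<close> by (simp add: two_point_dd_def)
    show "two_point_dd i a k = 0" if "k < 2 \<or> d < k" for k
      using that assms(1) \<open>i \<le> d\<close> q_zero by (auto simp: two_point_dd_def q_def)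
    show "(\<Sum>k=2..d. two_point_dd i a k) = 1"
      using sum_two_point[of "\<lambda>_. 1"] \<open>0 < a\<close> by (simp add: p_def q_def field_simps)
    show "1 / a = (\<Sum>k=2..d. two_point_dd i a k / real k)"
    proof -
      have "(\<Sum>k=2..d. two_point_dd i a k / real k) = p * (1 / real i) + q * (1 / real (i + 1))"
        using sum_two_point[of "\<lambda>k. 1 / real k"] by simp
      also have "\<dots> = (real i + 1 - a) / a + (a - real i) / a"
        using assms(1) by (simp add: p_def q_def add.commute)
      also have "\<dots> = 1 / a"
        by (simp add: add_divide_distrib[symmetric])
      finally show ?thesis ..
    qed
  qed
qed

lemma dd_eval_le_two_point:
  fixes d :: nat and a x :: real
  assumes x_low: "1 - 2 / (real d + 1) < x" and "x < 1"
    and h: "feasible_dd d a h" and "0 < a"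
  defines "i \<equiv> nat \<lfloor>a\<rfloor>"
  shows "dd_eval d h x \<le> dd_eval d (two_point_dd i a) x"
    and "h k \<noteq> 0 \<Longrightarrow> k \<noteq> i \<Longrightarrow> k \<noteq> i + 1 \<Longrightarrow> dd_eval d h x < dd_eval d (two_point_dd i a) x"
proof -
  have "2 \<le> a" "a \<le> real d"
    using feasible_dd_avg_degree_bounds[OF h \<open>0 < a\<close>] by auto
  have i: "2 \<le> i" "real i \<le> a" "a < real i + 1"
    unfolding i_def using \<open>2 \<le> a\<close> by linarith+
  define c where "c k = real k * x ^ (k - 1)" for k
  have conc: "c (k + 2) - c (k + 1) < c (k + 1) - c k" if "1 \<le> k" "k + 2 \<le> d + 1" for k
  proof -
    have "real k \<le> (real k + 2) * (1 - 2 / (real d + 1))"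
      using that(2) by (simp add: field_simps)
    also have "\<dots> < (real k + 2) * x"
      using x_low by simp
    finally show ?thesis
      using monomial_deriv_diff_strict_decreasing[OF \<open>1 \<le> k\<close> _ \<open>x < 1\<close>]
      by (simp add: c_def)
  qed
  define chord where "chord k = c i + (real k - real i) * (c (i + 1) - c i)" for k
  define \<alpha> where "\<alpha> = c (i + 1) - c i"
  define \<beta> where "\<beta> = c i - real i * \<alpha>"
  have dual_as_chord: "\<alpha> + \<beta> / real k = chord k / real k"
    and power_as_c: "x ^ (k - 1) = c k / real k" if "0 < k" for k
    using that by (simp_all add: \<alpha>_def \<beta>_def c_def chord_def field_simps)
  have below_chord: "c k \<le> chord k"
    and below_chord_strict: "k \<noteq> i \<Longrightarrow> k \<noteq> i + 1 \<Longrightarrow> c k < chord k"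
    if "k \<in> {2..d}" for k
    using strict_concave_below_chord[of 1 "d + 1" c i k] conc i that \<open>a \<le> real d\<close>
    by (auto simp: chord_def)
  have dual: "x ^ (k - 1) \<le> \<alpha> + \<beta> / real k" if "k \<in> {2..d}" for k
  proof -
    have "c k / real k \<le> chord k / real k"
      using below_chord[OF that] by (rule divide_right_mono) simp
    then show ?thesis
      using that power_as_c[of k] dual_as_chord[of k] by simp
  qed
  have dual_strict: "x ^ (k - 1) < \<alpha> + \<beta> / real k" if "k \<in> {2..d}" "k \<noteq> i" "k \<noteq> i + 1" for k
  proof -
    have "c k / real k < chord k / real k"
      using below_chord_strict[OF that] that(1) by (intro divide_strict_right_mono) auto
    then show ?thesis
      using that(1) power_as_c[of k] dual_as_chord[of k] by simp
  qed
  have tight: "x ^ (k - 1) = \<alpha> + \<beta> / real k" if "two_point_dd i a k \<noteq> 0" for k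
  proof -
    from that have "k = i \<or> k = i + 1"
      by (auto simp: two_point_dd_def split: if_splits)
    then have "0 < k" and "chord k = c k"
      using i by (auto simp: chord_def)
    then show ?thesis
      using power_as_c[of k] dual_as_chord[of k] by simp
  qed
  have "dd_eval d (two_point_dd i a) x = \<alpha> + \<beta> / a"
    using feasible_dd_two_point[of i a d] i \<open>a \<le> real d\<close>
    by (intro dd_eval_complementary_slackness tight) auto
  then show "dd_eval d h x \<le> dd_eval d (two_point_dd i a) x"
    and "h k \<noteq> 0 \<Longrightarrow> k \<noteq> i \<Longrightarrow> k \<noteq> i + 1 \<Longrightarrow> dd_eval d h x < dd_eval d (two_point_dd i a) x"
    using dd_eval_dual_bound[OF h dual] dual_strict feasible_dd_support[OF h, of k] by auto
qed

theorem theorem3: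
  fixes d :: nat and a x :: real
  assumes "0 < d" and "0 < a"
    and "1 - 2 / (real d + 1) < x" and "x < 1"
  shows "((\<exists>g. feasible_dd d a g) \<longrightarrow> (\<exists>g. maximizer_dd d a x g))
       \<and> (\<forall>g. maximizer_dd d a x g \<longrightarrow>
            (\<forall>k. k \<noteq> nat \<lfloor>a\<rfloor> \<and> k \<noteq> nat \<lfloor>a\<rfloor> + 1 \<longrightarrow> g k = 0))"
proof (intro conjI impI allI)
  define i where "i = nat \<lfloor>a\<rfloor>"
  have two_point_maximizer: "maximizer_dd d a x (two_point_dd i a)" if "feasible_dd d a h" for h
  proof -
    have "2 \<le> a" "a \<le> real d"
      using feasible_dd_avg_degree_bounds[OF that \<open>0 < a\<close>] by auto
    then have "feasible_dd d a (two_point_dd i a)"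
      unfolding i_def by (intro feasible_dd_two_point) linarith+
    then show ?thesis
      unfolding maximizer_dd_def i_def
      using dd_eval_le_two_point(1)[OF assms(3,4) _ \<open>0 < a\<close>] by blast
  qed
  show "\<exists>g. maximizer_dd d a x g" if "\<exists>g. feasible_dd d a g"
    using that two_point_maximizer by blast
  fix g k
  assume g: "maximizer_dd d a x g" and k: "k \<noteq> nat \<lfloor>a\<rfloor> \<and> k \<noteq> nat \<lfloor>a\<rfloor> + 1"
  then have "feasible_dd d a g"
    by (simp add: maximizer_dd_def)
  then have "dd_eval d (two_point_dd i a) x \<le> dd_eval d g x"
    using g two_point_maximizer by (auto simp: maximizer_dd_def)
  then show "g k = 0"
    using dd_eval_le_two_point(2)[OF assms(3,4) \<open>feasible_dd d a g\<close> \<open>0 < a\<close>, of k] k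
    unfolding i_def by linarith
qed

end
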